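(* Let $A>0$ be a constant and let $\mathcal{SC}$ denote the class of Carleson measures on $\mathbb{R}^+\times\mathbb{R}^d$ of the form $\mu=\mu_\beta$ with $\beta\in L^\infty(\mathbb{R}^+\times\mathbb{R}^d)$ satisfying $\|\beta\|^2_{L^\infty}\le A\|\mu\|_{\mathcal C}$, with norm $\|\mu\|_{\mathcal{SC}}:=\|\mu\|_{\mathcal C}$. Let $\phi:\mathbb{R}^d\to\mathbb{R}^d$ be a bi-Lipschitz homeomorphism preserving Lebesgue measure. Then there is a constant $C$ depending only on $d$ and $A$ such that for every $\mu\in\mathcal{SC}$, $$\|\mu^{\sharp\phi}\|_{\mathcal C}\le C\,\log(K_\phi)\,\|\mu\|_{\mathcal{SC}}.$$
   Context: For a bi-Lipschitz homeomorphism $\phi$ of $\mathbb{R}^d$, $K_\phi:=\sup_{x\neq y}\left(\frac{|\phi(x)-\phi(y)|}{|x-y|}+\frac{|x-y|}{|\phi(x)-\phi(y)|}\right)$ ($\ge 2$); "preserving Lebesgue measure" means $|\phi(A)|=|A|$ for all measurable $A$. For a ball $B\subset\mathbb{R}^d$ of radius $r_B$, $T(B)=\{(t,x):x\in B,\ 0<t\le r_B\}$; for a measure $\mu$ on $\mathbb{R}^+\times\mathbb{R}^d$, $\|\mu\|_{\mathcal C}=\sup_B|B|^{-1}\mu(T(B))$, and $\mu$ is Carleson if this is finite. For measurable $\beta$, $d\mu_\beta(t,x)=|\beta(t,x)|^2\frac{dt\,dx}{t}$. The pull-back is $\mu^{\sharp\phi}(I\times E)=\mu(I\times\phi^{-1}(E))$,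 so $\mu_\beta^{\sharp\phi}=\mu_{\beta^\phi}$ with $\beta^\phi(t,x)=\beta(t,\phi(x))$. *)

theory Defs
  imports "HOL-Analysis.Analysis" "HOL-Probability.Essential_Supremum"
begin

definition halfspace :: "(real \<times> 'a::euclidean_space) measure" where
  "halfspace = restrict_space lebesgue ({0<..} \<times> UNIV)"

definition mu_beta :: "(real \<times> 'a::euclidean_space \<Rightarrow> real) \<Rightarrow> (real \<times> 'a) measure" where
  "mu_beta \<beta> = density halfspace (\<lambda>(t,x). ennreal ((\<beta> (t,x))\<^sup>2 / t))"

definition tent :: "'a::euclidean_space \<Rightarrow> real \<Rightarrow> (real \<times> 'a) set" where
  "tent c r = {(t,x). x \<in> ball c r \<and> 0 < t \<and> t \<le> r}"

definition carleson_norm :: "(real \<times> 'a::euclidean_space) measure \<Rightarrow> ennreal" where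
  "carleson_norm \<mu> = (SUP (c,r) \<in> UNIV \<times> {0<..}. emeasure \<mu> (tent c r) / emeasure lebesgue (ball c r))"

definition Linf_norm :: "(real \<times> 'a::euclidean_space \<Rightarrow> real) \<Rightarrow> ereal" where
  "Linf_norm \<beta> = esssup halfspace (\<lambda>p. ereal \<bar>\<beta> p\<bar>)"

definition bi_lipschitz_homeo :: "('a::euclidean_space \<Rightarrow> 'a) \<Rightarrow> bool" where
  "bi_lipschitz_homeo \<phi> \<longleftrightarrow> bij \<phi> \<and> (\<exists>L. L-lipschitz_on UNIV \<phi>) \<and> (\<exists>L. L-lipschitz_on UNIV (inv \<phi>))"

definition preserves_lebesgue :: "('a::euclidean_space \<Rightarrow> 'a) \<Rightarrow> bool" where
  "preserves_lebesgue \<phi> \<longleftrightarrow> (\<forall>A \<in> sets lebesgue. \<phi> ` A \<in> sets lebesgue \<and> emeasure lebesgue (\<phi> ` A) = emeasure lebesgue A)"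

definition K_const :: "('a::euclidean_space \<Rightarrow> 'a) \<Rightarrow> real" where
  "K_const \<phi> = (SUP (x,y) \<in> {(x,y). x \<noteq> y}. dist (\<phi> x) (\<phi> y) / dist x y + dist x y / dist (\<phi> x) (\<phi> y))"

end

theory Submission
  imports Defs
begin

text \<open>
  Write \<open>K = K_\<phi>\<close>, \<open>B = B(c,r)\<close> and \<open>U = \<phi>(B)\<close>, an open set with \<open>|U| = |B|\<close>.
  Since \<open>(t,x) \<mapsto> (t,\<phi> x)\<close> preserves Lebesgue measure, the pulled-back measure of the tent
  \<open>T(B)\<close> is \<open>\<mu>((0,r] \<times> U)\<close>. Split at height \<open>s = r/K\<close>. Above \<open>s\<close> the density is at most
  \<open>\<parallel>\<beta>\<parallel>\<^sub>\<infinity>\<^sup>2/t\<close>, giving at most \<open>\<parallel>\<beta>\<parallel>\<^sub>\<infinity>\<^sup>2 log K |B|\<close>. Below \<open>s\<close>, take a Vitali cover of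
  \<open>U\<close> by balls of radius \<open>s\<close> whose fifths are disjoint; as \<open>\<phi>\<^sup>-\<^sup>1\<close> is \<open>K\<close>-Lipschitz, the fifths
  lie in \<open>\<phi>(2B)\<close>. The slab is covered by the tents over the cover, so its measure is at most
  \<open>5\<^sup>d \<parallel>\<mu>\<parallel>\<^sub>C |\<phi>(2B)| = 10\<^sup>d \<parallel>\<mu>\<parallel>\<^sub>C |B|\<close>. Finally \<open>\<parallel>\<beta>\<parallel>\<^sub>\<infinity>\<^sup>2 \<le> A \<parallel>\<mu>\<parallel>\<^sub>C\<close> and
  \<open>log K \<ge> log 2\<close> make both terms multiples of \<open>log K \<parallel>\<mu>\<parallel>\<^sub>C\<close>.
\<close>

lemma bi_lipschitz_homeo_inj: "bi_lipschitz_homeo \<phi> \<Longrightarrow> inj \<phi>"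
  unfolding bi_lipschitz_homeo_def using bij_is_inj by blast

lemma K_const_upper:
  fixes \<phi> :: "'a::euclidean_space \<Rightarrow> 'a"
  assumes "bi_lipschitz_homeo \<phi>" and "x \<noteq> y"
  shows "dist (\<phi> x) (\<phi> y) / dist x y + dist x y / dist (\<phi> x) (\<phi> y) \<le> K_const \<phi>"
proof -
  obtain L1 L2 where L1: "L1-lipschitz_on UNIV \<phi>" and L2: "L2-lipschitz_on UNIV (inv \<phi>)"
    using assms(1) unfolding bi_lipschitz_homeo_def by blast
  have inj: "inj \<phi>" using assms(1) by (rule bi_lipschitz_homeo_inj)
  have bounded: "dist (\<phi> u) (\<phi> v) / dist u v + dist u v / dist (\<phi> u) (\<phi> v) \<le> L1 + L2"
    if "u \<noteq> v" for u v
  proof -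
    have "dist (\<phi> u) (\<phi> v) \<le> L1 * dist u v" using L1 by (simp add: lipschitz_onD)
    moreover have "dist (inv \<phi> (\<phi> u)) (inv \<phi> (\<phi> v)) \<le> L2 * dist (\<phi> u) (\<phi> v)"
      using L2 by (simp add: lipschitz_onD)
    moreover have "\<phi> u \<noteq> \<phi> v" using inj that by (simp add: inj_eq)
    ultimately show ?thesis using that inj by (simp add: add_mono divide_le_eq)
  qed
  show ?thesis
    unfolding K_const_def
    by (rule cSUP_upper2[where x="(x,y)"]) (use assms(2) bounded in \<open>auto intro!: bdd_aboveI2\<close>)
qed

lemma K_const_ge_2:
  fixes \<phi> :: "'a::euclidean_space \<Rightarrow> 'a"
  assumes "bi_lipschitz_homeo \<phi>"
  shows "K_const \<phi> \<ge> 2"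
proof -
  obtain b :: 'a where "b \<in> Basis" using nonempty_Basis by blast
  then have "b \<noteq> 0" by (auto simp: nonzero_Basis)
  define u v where "u = dist (\<phi> b) (\<phi> 0)" and "v = dist b (0::'a)"
  have "u > 0" "v > 0"
    using \<open>b \<noteq> 0\<close> bi_lipschitz_homeo_inj[OF assms] by (auto simp: u_def v_def inj_eq)
  moreover have "0 \<le> (u - v)\<^sup>2" by simp
  ultimately have "2 \<le> u / v + v / u"
    by (simp add: field_simps power2_eq_square algebra_simps)
  also have "\<dots> \<le> K_const \<phi>" unfolding u_def v_def by (rule K_const_upper[OF assms \<open>b \<noteq> 0\<close>])
  finally show ?thesis .
qed

lemma dist_le_K_const:
  fixes \<phi> :: "'a::euclidean_space \<Rightarrow> 'a"
  assumes "bi_lipschitz_homeo \<phi>"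
  shows "dist x y \<le> K_const \<phi> * dist (\<phi> x) (\<phi> y)"
proof (cases "x = y")
  case False
  then have "\<phi> x \<noteq> \<phi> y" using bi_lipschitz_homeo_inj[OF assms] by (simp add: inj_eq)
  moreover have "dist x y / dist (\<phi> x) (\<phi> y) \<le> K_const \<phi>"
    using K_const_upper[OF assms False] zero_le_dist[of x y] zero_le_dist[of "\<phi> x" "\<phi> y"]
      divide_nonneg_nonneg[of "dist (\<phi> x) (\<phi> y)" "dist x y"] by linarith
  ultimately show ?thesis by (simp add: divide_le_eq mult.commute)
qed simp

lemma lebesgue_preserving_if_lborel_preserving:
  fixes f :: "'b::euclidean_space \<Rightarrow> 'b"
  assumes f: "f \<in> borel \<rightarrow>\<^sub>M borel" and D: "distr lborel lborel f = lborel"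
  shows "f \<in> lebesgue \<rightarrow>\<^sub>M lebesgue" and "distr lebesgue lebesgue f = lebesgue"
proof -
  have fm: "f \<in> lborel \<rightarrow>\<^sub>M lborel" using f by simp
  have null: "null_sets (distr lebesgue lborel f) = null_sets lborel"
    by (simp add: distr_completion[OF fm] D)
  show "f \<in> lebesgue \<rightarrow>\<^sub>M lebesgue"
    using completion.measurable_completion2[OF measurable_completion[OF fm]] null by simp
  have "lebesgue = completion (distr lebesgue lborel f)"
    by (simp add: distr_completion[OF fm] D)
  also have "\<dots> = distr lebesgue lebesgue f"
    by (rule completion.completion_distr_eq[OF measurable_completion[OF fm] null])
  finally show "distr lebesgue lebesgue f = lebesgue" ..
qed

lemma bi_lipschitz_homeo_continuous_on:
  assumes "bi_lipschitz_homeo \<phi>"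
  shows "continuous_on UNIV \<phi>" and "continuous_on UNIV (inv \<phi>)"
  using assms lipschitz_on_continuous_on unfolding bi_lipschitz_homeo_def by blast+

lemma bi_lipschitz_homeo_open_image:
  assumes "bi_lipschitz_homeo \<phi>" and "open V"
  shows "open (\<phi> ` V)"
proof -
  have "\<phi> ` V = inv \<phi> -` V"
    using assms(1) unfolding bi_lipschitz_homeo_def
    by (simp add: bij_vimage_eq_inv_image bij_imp_bij_inv inv_inv_eq)
  then show ?thesis
    using bi_lipschitz_homeo_continuous_on(2)[OF assms(1)] assms(2)
    by (simp add: continuous_on_open_vimage)
qed

lemma preserves_lebesgue_emeasure_lborel:
  assumes "preserves_lebesgue \<phi>" and "V \<in> sets borel" and "\<phi> ` V \<in> sets borel"
  shows "emeasure lborel (\<phi> ` V) = emeasure lborel V"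
proof -
  have "V \<in> sets lebesgue" using assms(2) by simp
  then have "emeasure lebesgue (\<phi> ` V) = emeasure lebesgue V"
    using assms(1) unfolding preserves_lebesgue_def by blast
  then show ?thesis using assms(2,3) by simp
qed

lemma distr_lborel_bi_lipschitz_homeo:
  assumes bl: "bi_lipschitz_homeo \<phi>" and pl: "preserves_lebesgue \<phi>"
  shows "distr lborel lborel \<phi> = lborel"
proof (rule measure_eqI)
  have fm: "\<phi> \<in> lborel \<rightarrow>\<^sub>M lborel"
    using borel_measurable_continuous_onI[OF bi_lipschitz_homeo_continuous_on(1)[OF bl]] by simp
  fix B assume "B \<in> sets (distr lborel lborel \<phi>)"
  then have B: "B \<in> sets borel" by simp
  have pre: "\<phi> -` B \<in> sets borel" using measurable_sets[OF fm] B by simp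
  have "\<phi> ` (\<phi> -` B) = B"
    using bl unfolding bi_lipschitz_homeo_def by (simp add: bij_is_surj surj_image_vimage_eq)
  then have "emeasure lborel (\<phi> -` B) = emeasure lborel B"
    using preserves_lebesgue_emeasure_lborel[OF pl pre] B by simp
  then show "emeasure (distr lborel lborel \<phi>) B = emeasure lborel B"
    using fm B by (simp add: emeasure_distr)
qed simp

lemma lebesgue_preserving_bi_lipschitz_homeo_snd:
  fixes \<phi> :: "'a::euclidean_space \<Rightarrow> 'a"
  assumes bl: "bi_lipschitz_homeo \<phi>" and pl: "preserves_lebesgue \<phi>"
  defines "\<Phi> \<equiv> \<lambda>(t::real, x). (t, \<phi> x)"
  shows "\<Phi> \<in> lebesgue \<rightarrow>\<^sub>M lebesgue" and "distr lebesgue lebesgue \<Phi> = lebesgue"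
proof -
  have \<phi>m[measurable]: "\<phi> \<in> borel \<rightarrow>\<^sub>M borel"
    by (rule borel_measurable_continuous_onI[OF bi_lipschitz_homeo_continuous_on(1)[OF bl]])
  have \<Phi>m: "\<Phi> \<in> borel \<rightarrow>\<^sub>M borel"
    unfolding \<Phi>_def borel_prod[symmetric] by measurable
  have "distr (lborel \<Otimes>\<^sub>M lborel) (lborel \<Otimes>\<^sub>M lborel) \<Phi>
      = distr lborel lborel (\<lambda>t::real. t) \<Otimes>\<^sub>M distr lborel lborel \<phi>"
    unfolding \<Phi>_def
    by (rule pair_measure_distr[symmetric]) (auto simp: distr_lborel_bi_lipschitz_homeo[OF bl pl]
        \<phi>m intro: lborel.sigma_finite_measure_axioms)
  then have "distr lborel lborel \<Phi> = lborel"
    by (simp add: distr_lborel_bi_lipschitz_homeo[OF bl pl] lborel_prod)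
  then show "\<Phi> \<in> lebesgue \<rightarrow>\<^sub>M lebesgue" and "distr lebesgue lebesgue \<Phi> = lebesgue"
    using lebesgue_preserving_if_lborel_preserving[OF \<Phi>m] by auto
qed

lemma halfspace_in_sets_lebesgue:
  "({0<..} \<times> UNIV :: (real \<times> 'a::euclidean_space) set) \<in> sets lebesgue"
  by (simp add: borel_Times)

lemma sets_halfspace_iff:
  "A \<in> sets (halfspace :: (real \<times> 'a::euclidean_space) measure)
     \<longleftrightarrow> A \<subseteq> {0<..} \<times> UNIV \<and> A \<in> sets lebesgue"
  unfolding halfspace_def
  by (subst sets_restrict_space_iff) (use halfspace_in_sets_lebesgue in auto)

lemma Times_in_sets_halfspace:
  fixes V :: "'a::euclidean_space set"
  assumes "I \<in> sets borel" "I \<subseteq> {0<..}" "V \<in> sets borel"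
  shows "I \<times> V \<in> sets halfspace"
  using assms by (auto simp: sets_halfspace_iff borel_Times)

lemma tent_eq_Times: "tent c r = {0<..r} \<times> ball c r"
  unfolding tent_def by auto

lemma tent_in_sets_halfspace: "tent c r \<in> sets halfspace"
  unfolding tent_eq_Times by (rule Times_in_sets_halfspace) auto

lemma fst_measurable_halfspace[measurable]:
  "(fst :: real \<times> 'a::euclidean_space \<Rightarrow> real) \<in> borel_measurable halfspace"
  unfolding halfspace_def
  by (intro measurable_restrict_space1 measurable_completion) (simp add: borel_prod[symmetric])

lemma mu_beta_density_measurable:
  fixes \<beta> :: "real \<times> 'a::euclidean_space \<Rightarrow> real"
  assumes [measurable]: "\<beta> \<in> borel_measurable halfspace" and A: "A \<in> sets halfspace"
  shows "(\<lambda>q. ennreal ((\<beta> q)\<^sup>2 / fst q) * indicator A q) \<in> borel_measurable lebesgue"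
proof -
  have "(\<lambda>q. ennreal ((\<beta> q)\<^sup>2 / fst q) * indicator A q) \<in> borel_measurable halfspace"
    using A by measurable
  then have "(\<lambda>q. ennreal ((\<beta> q)\<^sup>2 / fst q) * indicator A q * indicator ({0<..} \<times> UNIV) q)
      \<in> borel_measurable lebesgue"
    unfolding halfspace_def
    by (subst (asm) borel_measurable_restrict_space_iff_ennreal)
      (use halfspace_in_sets_lebesgue in auto)
  moreover have "A \<subseteq> {0<..} \<times> UNIV" using A by (simp add: sets_halfspace_iff)
  then have "indicator A q * indicator ({0<..} \<times> UNIV) q = (indicator A q :: ennreal)" for q
    by (auto simp: indicator_def)
  ultimately show ?thesis by (simp add: mult.assoc)
qed

lemma emeasure_mu_beta:
  fixes \<beta> :: "real \<times> 'a::euclidean_space \<Rightarrow> real"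
  assumes [measurable]: "\<beta> \<in> borel_measurable halfspace" and A: "A \<in> sets halfspace"
  shows "emeasure (mu_beta \<beta>) A = (\<integral>\<^sup>+q. ennreal ((\<beta> q)\<^sup>2 / fst q) * indicator A q \<partial>lebesgue)"
proof -
  have "(\<lambda>(t,x). ennreal ((\<beta> (t,x))\<^sup>2 / t)) = (\<lambda>q. ennreal ((\<beta> q)\<^sup>2 / fst q))"
    by auto
  then have "emeasure (mu_beta \<beta>) A = (\<integral>\<^sup>+q. ennreal ((\<beta> q)\<^sup>2 / fst q) * indicator A q \<partial>halfspace)"
    unfolding mu_beta_def using A by (simp add: emeasure_density)
  also have "\<dots> = (\<integral>\<^sup>+q. ennreal ((\<beta> q)\<^sup>2 / fst q) * indicator A q * indicator ({0<..} \<times> UNIV) q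
      \<partial>lebesgue)"
    unfolding halfspace_def
    by (subst nn_integral_restrict_space) (use halfspace_in_sets_lebesgue in auto)
  also have "\<dots> = (\<integral>\<^sup>+q. ennreal ((\<beta> q)\<^sup>2 / fst q) * indicator A q \<partial>lebesgue)"
    using A by (intro nn_integral_cong) (auto simp: sets_halfspace_iff indicator_def)
  finally show ?thesis .
qed

lemma emeasure_mu_beta_pullback:
  fixes \<phi> :: "'a::euclidean_space \<Rightarrow> 'a" and \<beta> :: "real \<times> 'a \<Rightarrow> real"
  defines "\<Phi> \<equiv> \<lambda>(t::real, x). (t, \<phi> x)"
  assumes \<Phi>m: "\<Phi> \<in> lebesgue \<rightarrow>\<^sub>M lebesgue" and \<Phi>d: "distr lebesgue lebesgue \<Phi> = lebesgue"
    and "inj \<phi>" and \<beta>m[measurable]: "\<beta> \<in> borel_measurable halfspace"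
    and I: "I \<in> sets borel" "I \<subseteq> {0<..}" and V: "V \<in> sets borel" "\<phi> ` V \<in> sets borel"
  shows "emeasure (mu_beta (\<lambda>(t,x). \<beta> (t, \<phi> x))) (I \<times> V) = emeasure (mu_beta \<beta>) (I \<times> \<phi> ` V)"
proof -
  have "\<Phi> \<in> halfspace \<rightarrow>\<^sub>M halfspace"
    unfolding halfspace_def by (rule measurable_restrict_space3[OF \<Phi>m]) (auto simp: \<Phi>_def)
  then have "(\<lambda>(t,x). \<beta> (t, \<phi> x)) \<in> borel_measurable halfspace"
    using measurable_compose[of \<Phi> halfspace halfspace \<beta>] \<beta>m by (simp add: \<Phi>_def case_prod_beta')
  then have "emeasure (mu_beta (\<lambda>(t,x). \<beta> (t, \<phi> x))) (I \<times> V)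
      = (\<integral>\<^sup>+q. ennreal ((\<beta> (\<Phi> q))\<^sup>2 / fst q) * indicator (I \<times> V) q \<partial>lebesgue)"
    using Times_in_sets_halfspace[OF I V(1)] by (simp add: emeasure_mu_beta \<Phi>_def case_prod_beta')
  also have "\<dots> = (\<integral>\<^sup>+q. ennreal ((\<beta> (\<Phi> q))\<^sup>2 / fst (\<Phi> q)) * indicator (I \<times> \<phi> ` V) (\<Phi> q)
      \<partial>lebesgue)"
  proof (intro nn_integral_cong)
    fix q :: "real \<times> 'a"
    obtain t x where q: "q = (t, x)" by (cases q)
    have "\<phi> x \<in> \<phi> ` V \<longleftrightarrow> x \<in> V" using \<open>inj \<phi>\<close> by (rule inj_image_mem_iff)
    then show "ennreal ((\<beta> (\<Phi> q))\<^sup>2 / fst q) * indicator (I \<times> V) q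
        = ennreal ((\<beta> (\<Phi> q))\<^sup>2 / fst (\<Phi> q)) * indicator (I \<times> \<phi> ` V) (\<Phi> q)"
      by (simp add: q \<Phi>_def indicator_def)
  qed
  also have "\<dots> = (\<integral>\<^sup>+q. ennreal ((\<beta> q)\<^sup>2 / fst q) * indicator (I \<times> \<phi> ` V) q
      \<partial>distr lebesgue lebesgue \<Phi>)"
    using mu_beta_density_measurable[OF \<beta>m Times_in_sets_halfspace[OF I V(2)]]
    by (simp add: nn_integral_distr[OF \<Phi>m])
  also have "\<dots> = emeasure (mu_beta \<beta>) (I \<times> \<phi> ` V)"
    using Times_in_sets_halfspace[OF I V(2)] by (simp add: \<Phi>d emeasure_mu_beta)
  finally show ?thesis .
qed

lemma emeasure_lborel_ball_pos_finite:
  fixes c :: "'a::euclidean_space"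
  assumes "r > 0"
  shows "emeasure lborel (ball c r) \<noteq> 0" and "emeasure lborel (ball c r) \<noteq> \<infinity>"
proof -
  have "unit_ball_vol (real DIM('a)) > 0" by simp
  then show "emeasure lborel (ball c r) \<noteq> 0" and "emeasure lborel (ball c r) \<noteq> \<infinity>"
    using assms by (simp_all add: emeasure_ball less_imp_neq[symmetric])
qed

lemma emeasure_ball_scale:
  fixes c y :: "'a::euclidean_space"
  assumes "a \<ge> 0" "r \<ge> 0"
  shows "emeasure lborel (ball y (a * r)) = ennreal a ^ DIM('a) * emeasure lborel (ball c r)"
proof -
  have "ennreal a ^ DIM('a) * ennreal (unit_ball_vol DIM('a) * r ^ DIM('a))
      = ennreal (unit_ball_vol DIM('a) * (a * r) ^ DIM('a))"
    using assms by (simp add: ennreal_power ennreal_mult[symmetric] power_mult_distrib mult_ac)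
  then show ?thesis using assms by (simp add: emeasure_ball[of r c] emeasure_ball[of "a * r" y])
qed

lemma emeasure_tent_le_carleson_norm:
  fixes \<mu> :: "(real \<times> 'a::euclidean_space) measure"
  assumes "r > 0"
  shows "emeasure \<mu> (tent c r) \<le> carleson_norm \<mu> * emeasure lborel (ball c r)"
proof -
  let ?b = "emeasure lborel (ball c r)"
  have "emeasure \<mu> (tent c r) / ?b \<le> carleson_norm \<mu>"
    unfolding carleson_norm_def using assms by (intro SUP_upper2[of "(c,r)"]) auto
  then have "emeasure \<mu> (tent c r) / ?b * ?b \<le> carleson_norm \<mu> * ?b"
    by (rule mult_right_mono) simp
  moreover have "?b / ?b = 1"
    using emeasure_lborel_ball_pos_finite[OF assms, of c] by (simp add: divide_eq_1_ennreal)
  ultimately show ?thesis by (simp add: ennreal_divide_times)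
qed

lemma carleson_norm_le:
  fixes \<mu> :: "(real \<times> 'a::euclidean_space) measure"
  assumes "\<And>c r. r > 0 \<Longrightarrow> emeasure \<mu> (tent c r) \<le> a * emeasure lborel (ball c r)"
  shows "carleson_norm \<mu> \<le> a"
  unfolding carleson_norm_def
proof (rule SUP_least, clarify)
  fix c :: 'a and r :: real assume "r > 0"
  then show "emeasure \<mu> (tent c r) / emeasure lebesgue (ball c r) \<le> a"
    using assms[OF \<open>r > 0\<close>, of c] emeasure_lborel_ball_pos_finite[OF \<open>r > 0\<close>, of c]
    by (intro divide_le_posI_ennreal) (auto simp: mult.commute intro: gr_zeroI)
qed

lemma emeasure_UN_countable_le:
  assumes "countable I" and sets: "\<And>i. i \<in> I \<Longrightarrow> X i \<in> sets M"
  shows "emeasure M (\<Union>(X ` I)) \<le> (\<integral>\<^sup>+i. emeasure M (X i) \<partial>count_space I)"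
proof -
  have "indicator (\<Union>(X ` I)) x \<le> (\<integral>\<^sup>+i. indicator (X i) x \<partial>count_space I)" for x
  proof (cases "x \<in> \<Union>(X ` I)")
    case True
    then obtain j where j: "j \<in> I" "x \<in> X j" by auto
    then have "(1::ennreal) = (\<integral>\<^sup>+i. indicator {j} i \<partial>count_space I)"
      by (simp add: nn_integral_indicator')
    also have "\<dots> \<le> (\<integral>\<^sup>+i. indicator (X i) x \<partial>count_space I)"
      using j by (intro nn_integral_mono) (auto simp: indicator_def)
    finally show ?thesis using True by simp
  qed simp
  then have "(\<integral>\<^sup>+x. indicator (\<Union>(X ` I)) x \<partial>M) \<le> (\<integral>\<^sup>+x. \<integral>\<^sup>+i. indicator (X i) x \<partial>count_space I \<partial>M)"
    by (intro nn_integral_mono)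
  also have "\<dots> = (\<integral>\<^sup>+i. \<integral>\<^sup>+x. indicator (X i) x \<partial>M \<partial>count_space I)"
    using assms by (intro nn_integral_count_space_nn_integral) auto
  also have "\<dots> = (\<integral>\<^sup>+i. emeasure M (X i) \<partial>count_space I)"
    using sets by (intro nn_integral_cong) auto
  finally show ?thesis
    using assms by (simp add: sets.countable_UN'')
qed

lemma Vitali_cover_image_ball:
  fixes \<phi> :: "'a::euclidean_space \<Rightarrow> 'a"
  assumes "surj \<phi>" and expand: "\<And>x y. dist x y \<le> K * dist (\<phi> x) (\<phi> y)" and "K > 0" "r > 0"
  obtains C where "countable C" "disjoint_family_on (\<lambda>y. ball y (r / K / 5)) C"
    "\<phi> ` ball c r \<subseteq> (\<Union>y\<in>C. ball y (r / K))"
    "(\<Union>y\<in>C. ball y (r / K / 5)) \<subseteq> \<phi> ` ball c (2 * r)"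
proof -
  define s where "s = r / K"
  have "s > 0" using assms by (simp add: s_def)
  obtain C where C: "countable C" "C \<subseteq> \<phi> ` ball c r"
      "pairwise (\<lambda>i j. disjnt (ball i (s / 5)) (ball j (s / 5))) C"
      "\<phi> ` ball c r \<subseteq> (\<Union>i\<in>C. ball i (5 * (s / 5)))"
    by (rule Vitali_covering_lemma_balls[of "\<phi> ` ball c r" id "\<lambda>_. s / 5" _ "s / 5"])
      (use \<open>s > 0\<close> in auto)
  have "(\<Union>y\<in>C. ball y (s / 5)) \<subseteq> \<phi> ` ball c (2 * r)"
  proof
    fix w assume "w \<in> (\<Union>y\<in>C. ball y (s / 5))"
    then obtain x where x: "x \<in> ball c r" "dist (\<phi> x) w < s / 5" using C(2) by auto
    obtain z where w: "w = \<phi> z" using \<open>surj \<phi>\<close> by (metis surj_def)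
    have "dist x z \<le> K * dist (\<phi> x) (\<phi> z)" by (rule expand)
    also have "\<dots> < K * (s / 5)" using x w \<open>K > 0\<close> by (intro mult_strict_left_mono) auto
    also have "\<dots> < r" using \<open>K > 0\<close> \<open>r > 0\<close> by (simp add: s_def)
    finally have "dist c z < 2 * r" using x(1) dist_triangle[of c z x] by simp
    then show "w \<in> \<phi> ` ball c (2 * r)" using w by auto
  qed
  then show ?thesis
    using that C unfolding s_def disjoint_family_on_def pairwise_def disjnt_def by auto
qed

lemma emeasure_lower_slab_le_carleson_norm:
  fixes \<mu> :: "(real \<times> 'a::euclidean_space) measure" and \<phi> :: "'a \<Rightarrow> 'a"
  assumes tents: "\<And>c r. tent c r \<in> sets \<mu>"
    and bl: "bi_lipschitz_homeo \<phi>" and pl: "preserves_lebesgue \<phi>" and "r > 0"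
  shows "emeasure \<mu> ({0<..r / K_const \<phi>} \<times> \<phi> ` ball c r)
    \<le> 10 ^ DIM('a) * carleson_norm \<mu> * emeasure lborel (ball c r)"
proof -
  define K where "K = K_const \<phi>"
  define s where "s = r / K"
  define N where "N = carleson_norm \<mu>"
  have "K \<ge> 2" unfolding K_def by (rule K_const_ge_2[OF bl])
  then have "s > 0" using \<open>r > 0\<close> by (simp add: s_def)
  have "surj \<phi>" using bl by (simp add: bi_lipschitz_homeo_def bij_is_surj)
  obtain C where C: "countable C" "disjoint_family_on (\<lambda>y. ball y (s / 5)) C"
      "\<phi> ` ball c r \<subseteq> (\<Union>y\<in>C. ball y s)" "(\<Union>y\<in>C. ball y (s / 5)) \<subseteq> \<phi> ` ball c (2 * r)"
    using Vitali_cover_image_ball[OF \<open>surj \<phi>\<close> dist_le_K_const[OF bl], of r c] \<open>K \<ge> 2\<close> \<open>r > 0\<close>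
    unfolding s_def K_def by auto
  have "{0<..s} \<times> \<phi> ` ball c r \<subseteq> (\<Union>y\<in>C. tent y s)"
    using C(3) unfolding tent_def by fastforce
  then have "emeasure \<mu> ({0<..s} \<times> \<phi> ` ball c r) \<le> emeasure \<mu> (\<Union>y\<in>C. tent y s)"
    using C(1) tents by (intro emeasure_mono sets.countable_UN'') auto
  also have "\<dots> \<le> (\<integral>\<^sup>+y. emeasure \<mu> (tent y s) \<partial>count_space C)"
    using C(1) tents by (rule emeasure_UN_countable_le)
  also have "\<dots> \<le> (\<integral>\<^sup>+y. N * 5 ^ DIM('a) * emeasure lborel (ball y (s / 5)) \<partial>count_space C)"
  proof (intro nn_integral_mono)
    fix y :: 'a
    have "emeasure \<mu> (tent y s) \<le> N * emeasure lborel (ball y s)"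
      unfolding N_def by (rule emeasure_tent_le_carleson_norm[OF \<open>s > 0\<close>])
    also have "emeasure lborel (ball y s) = 5 ^ DIM('a) * emeasure lborel (ball y (s / 5))"
      using emeasure_ball_scale[of 5 "s / 5" y y] \<open>s > 0\<close> by simp
    finally show "emeasure \<mu> (tent y s) \<le> N * 5 ^ DIM('a) * emeasure lborel (ball y (s / 5))"
      by (simp add: mult.assoc)
  qed
  also have "\<dots> = N * 5 ^ DIM('a) * emeasure lborel (\<Union>y\<in>C. ball y (s / 5))"
    using C(1,2) by (simp add: nn_integral_cmult emeasure_UN_countable)
  also have "\<dots> \<le> N * 5 ^ DIM('a) * emeasure lborel (\<phi> ` ball c (2 * r))"
    using C(4) bi_lipschitz_homeo_open_image[OF bl, of "ball c (2 * r)"]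
    by (intro mult_left_mono emeasure_mono) auto
  also have "\<dots> = N * 5 ^ DIM('a) * (2 ^ DIM('a) * emeasure lborel (ball c r))"
    using preserves_lebesgue_emeasure_lborel[OF pl, of "ball c (2 * r)"]
      bi_lipschitz_homeo_open_image[OF bl, of "ball c (2 * r)"]
      emeasure_ball_scale[of 2 r c c] \<open>r > 0\<close> by simp
  also have "\<dots> = 10 ^ DIM('a) * N * emeasure lborel (ball c r)"
    by (simp add: mult_ac flip: power_mult_distrib)
  finally show ?thesis unfolding s_def K_def N_def .
qed

lemma nn_integral_inverse_le_ln:
  assumes "0 < s" "s \<le> r" "a \<ge> 0"
  shows "(\<integral>\<^sup>+t. ennreal (a / t) * indicator {s<..r} t \<partial>lborel) \<le> ennreal (a * ln (r / s))"
proof -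
  have "(\<integral>\<^sup>+t. ennreal (a / t) * indicator {s<..r} t \<partial>lborel)
      \<le> (\<integral>\<^sup>+t. ennreal (a / t) * indicator {s..r} t \<partial>lborel)"
    by (intro nn_integral_mono mult_left_mono) (auto simp: indicator_def)
  also have "\<dots> = ennreal (a * ln r - a * ln s)"
  proof (rule nn_integral_FTC_Icc)
    fix t assume "t \<in> {s..r}"
    then have "t > 0" using assms by auto
    then show "((\<lambda>t. a * ln t) has_real_derivative a / t) (at t)"
      by (auto intro!: derivative_eq_intros)
    show "0 \<le> a / t" using \<open>t > 0\<close> \<open>a \<ge> 0\<close> by simp
  qed (use assms in auto)
  also have "a * ln r - a * ln s = a * ln (r / s)"
    using assms by (simp add: ln_div right_diff_distrib)
  finally show ?thesis .
qed

lemma nn_integral_fst_Times: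
  fixes U :: "'a::euclidean_space set" and I :: "real set" and g :: "real \<Rightarrow> ennreal"
  assumes [measurable]: "I \<in> sets borel" "U \<in> sets borel" "g \<in> borel_measurable borel"
  shows "(\<integral>\<^sup>+q. g (fst q) * indicator (I \<times> U) q \<partial>lebesgue)
       = (\<integral>\<^sup>+t. g t * indicator I t \<partial>lborel) * emeasure lborel U"
proof -
  have m: "(\<lambda>q::real \<times> 'a. g (fst q) * indicator (I \<times> U) q) \<in> borel_measurable (lborel \<Otimes>\<^sub>M lborel)"
    by measurable
  have "(\<integral>\<^sup>+q. g (fst q) * indicator (I \<times> U) q \<partial>lebesgue)
      = (\<integral>\<^sup>+q. g (fst q) * indicator (I \<times> U) q \<partial>(lborel \<Otimes>\<^sub>M lborel))"
    by (simp add: nn_integral_completion lborel_prod)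
  also have "\<dots> = (\<integral>\<^sup>+t. \<integral>\<^sup>+y. g t * indicator I t * indicator U y \<partial>lborel \<partial>lborel)"
    by (subst lborel.nn_integral_fst[OF m, symmetric]) (simp add: indicator_times mult.assoc)
  also have "\<dots> = (\<integral>\<^sup>+t. g t * indicator I t * emeasure lborel U \<partial>lborel)"
    by (simp add: nn_integral_cmult_indicator)
  also have "\<dots> = (\<integral>\<^sup>+t. g t * indicator I t \<partial>lborel) * emeasure lborel U"
    by (rule nn_integral_multc) measurable
  finally show ?thesis .
qed

lemma emeasure_mu_beta_upper_slab_le:
  fixes \<beta> :: "real \<times> 'a::euclidean_space \<Rightarrow> real"
  assumes \<beta>m: "\<beta> \<in> borel_measurable halfspace" and bound: "AE p in halfspace. \<bar>\<beta> p\<bar> \<le> M"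
    and "0 < s" "s \<le> r" and [measurable]: "U \<in> sets borel"
  shows "emeasure (mu_beta \<beta>) ({s<..r} \<times> U) \<le> ennreal (M\<^sup>2 * ln (r / s)) * emeasure lborel U"
proof -
  have bound': "AE q in lebesgue. q \<in> {0<..} \<times> UNIV \<longrightarrow> \<bar>\<beta> q\<bar> \<le> M"
    using bound halfspace_in_sets_lebesgue unfolding halfspace_def
    by (subst (asm) AE_restrict_space_iff) auto
  have "emeasure (mu_beta \<beta>) ({s<..r} \<times> U)
      = (\<integral>\<^sup>+q. ennreal ((\<beta> q)\<^sup>2 / fst q) * indicator ({s<..r} \<times> U) q \<partial>lebesgue)"
    using \<open>0 < s\<close> by (intro emeasure_mu_beta[OF \<beta>m] Times_in_sets_halfspace) auto
  also have "\<dots> \<le> (\<integral>\<^sup>+q. ennreal (M\<^sup>2 / fst q) * indicator ({s<..r} \<times> U) q \<partial>lebesgue)"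
  proof (rule nn_integral_mono_AE, use bound' in \<open>rule eventually_mono\<close>)
    fix q :: "real \<times> 'a" assume hyp: "q \<in> {0<..} \<times> UNIV \<longrightarrow> \<bar>\<beta> q\<bar> \<le> M"
    show "ennreal ((\<beta> q)\<^sup>2 / fst q) * indicator ({s<..r} \<times> U) q
        \<le> ennreal (M\<^sup>2 / fst q) * indicator ({s<..r} \<times> U) q"
    proof (cases "fst q > s")
      case True
      then have "fst q > 0" "\<bar>\<beta> q\<bar> \<le> M" using hyp \<open>0 < s\<close> by (auto simp: mem_Times_iff)
      then have "\<bar>\<beta> q\<bar> \<le> \<bar>M\<bar>" by linarith
      then have "(\<beta> q)\<^sup>2 / fst q \<le> M\<^sup>2 / fst q"
        using \<open>fst q > 0\<close> by (intro divide_right_mono) (auto simp: abs_le_square_iff)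
      then show ?thesis by (intro mult_right_mono ennreal_leI) auto
    qed (simp add: indicator_def mem_Times_iff)
  qed
  also have "\<dots> = (\<integral>\<^sup>+t. ennreal (M\<^sup>2 / t) * indicator {s<..r} t \<partial>lborel) * emeasure lborel U"
    by (rule nn_integral_fst_Times[where g = "\<lambda>t. ennreal (M\<^sup>2 / t)"]) auto
  also have "\<dots> \<le> ennreal (M\<^sup>2 * ln (r / s)) * emeasure lborel U"
    by (intro mult_right_mono nn_integral_inverse_le_ln) (use assms in auto)
  finally show ?thesis .
qed

lemma emeasure_tent_pullback_le:
  fixes \<phi> :: "'a::euclidean_space \<Rightarrow> 'a" and \<beta> :: "real \<times> 'a \<Rightarrow> real"
  assumes bl: "bi_lipschitz_homeo \<phi>" and pl: "preserves_lebesgue \<phi>"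
    and \<beta>m: "\<beta> \<in> borel_measurable halfspace" and bound: "AE p in halfspace. \<bar>\<beta> p\<bar> \<le> M"
    and "r > 0"
  shows "emeasure (mu_beta (\<lambda>(t,x). \<beta> (t, \<phi> x))) (tent c r)
    \<le> (ennreal (M\<^sup>2 * ln (K_const \<phi>)) + 10 ^ DIM('a) * carleson_norm (mu_beta \<beta>))
        * emeasure lborel (ball c r)"
proof -
  define K where "K = K_const \<phi>"
  define s where "s = r / K"
  define U where "U = \<phi> ` ball c r"
  have "K \<ge> 2" unfolding K_def by (rule K_const_ge_2[OF bl])
  then have "0 < s" "s \<le> r" "ln (r / s) = ln K" using \<open>r > 0\<close> by (auto simp: s_def field_simps)
  have "open U" unfolding U_def by (rule bi_lipschitz_homeo_open_image[OF bl]) simp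
  then have U: "U \<in> sets borel" "emeasure lborel U = emeasure lborel (ball c r)"
    using preserves_lebesgue_emeasure_lborel[OF pl] by (auto simp: U_def)
  have tents: "tent y t \<in> sets (mu_beta \<beta>)" for y t
    by (simp add: mu_beta_def tent_in_sets_halfspace)
  have "emeasure (mu_beta (\<lambda>(t,x). \<beta> (t, \<phi> x))) (tent c r) = emeasure (mu_beta \<beta>) ({0<..r} \<times> U)"
    unfolding tent_eq_Times U_def
    using lebesgue_preserving_bi_lipschitz_homeo_snd[OF bl pl] bi_lipschitz_homeo_inj[OF bl] U(1)
    by (intro emeasure_mu_beta_pullback[OF _ _ _ \<beta>m]) (auto simp: U_def)
  also have "{0<..r} \<times> U = {s<..r} \<times> U \<union> {0<..s} \<times> U"
    using \<open>0 < s\<close> \<open>s \<le> r\<close> by auto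
  also have "emeasure (mu_beta \<beta>) \<dots>
      = emeasure (mu_beta \<beta>) ({s<..r} \<times> U) + emeasure (mu_beta \<beta>) ({0<..s} \<times> U)"
    using \<open>0 < s\<close> U(1)
    by (intro plus_emeasure[symmetric]) (auto simp: mu_beta_def intro!: Times_in_sets_halfspace)
  also have "\<dots> \<le> ennreal (M\<^sup>2 * ln K) * emeasure lborel (ball c r)
      + 10 ^ DIM('a) * carleson_norm (mu_beta \<beta>) * emeasure lborel (ball c r)"
  proof (rule add_mono)
    show "emeasure (mu_beta \<beta>) ({s<..r} \<times> U) \<le> ennreal (M\<^sup>2 * ln K) * emeasure lborel (ball c r)"
      using emeasure_mu_beta_upper_slab_le[OF \<beta>m bound \<open>0 < s\<close> \<open>s \<le> r\<close> U(1)] U(2)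
        \<open>ln (r / s) = ln K\<close> by simp
    show "emeasure (mu_beta \<beta>) ({0<..s} \<times> U)
        \<le> 10 ^ DIM('a) * carleson_norm (mu_beta \<beta>) * emeasure lborel (ball c r)"
      using emeasure_lower_slab_le_carleson_norm[OF tents bl pl \<open>r > 0\<close>]
      unfolding s_def K_def U_def .
  qed
  finally show ?thesis unfolding K_def by (simp add: distrib_right)
qed

lemma Linf_norm_bound:
  fixes \<beta> :: "real \<times> 'a::euclidean_space \<Rightarrow> real"
  assumes "Linf_norm \<beta> < \<infinity>"
  obtains M where "AE p in halfspace. \<bar>\<beta> p\<bar> \<le> M" and "ereal (M\<^sup>2) \<le> (Linf_norm \<beta>)\<^sup>2"
proof -
  define M where "M = max 0 (real_of_ereal (Linf_norm \<beta>))"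
  have "AE p in halfspace. ereal \<bar>\<beta> p\<bar> \<le> Linf_norm \<beta>"
    unfolding Linf_norm_def by (rule esssup_AE)
  then have "AE p in halfspace. \<bar>\<beta> p\<bar> \<le> M"
    by (rule eventually_mono) (use assms in \<open>cases "Linf_norm \<beta>"; auto simp: M_def\<close>)
  moreover have "ereal (M\<^sup>2) \<le> (Linf_norm \<beta>)\<^sup>2"
    using assms by (cases "Linf_norm \<beta>") (auto simp: M_def max_def power2_eq_square)
  ultimately show ?thesis using that by blast
qed

lemma ennreal_ln_affine_le:
  fixes K n m A B :: real
  assumes "K \<ge> 2" "n \<ge> 0" "0 \<le> m" "m \<le> A * n" "A \<ge> 0" "B \<ge> 0"
  shows "ennreal (m * ln K) + ennreal B * ennreal n \<le> ennreal ((A + B / ln 2) * ln K) * ennreal n"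
proof -
  have "ln K \<ge> ln 2" "ln 2 > (0::real)" using assms(1) by auto
  then have "ln K > 0" by linarith
  from \<open>ln K \<ge> ln 2\<close> \<open>ln 2 > 0\<close> have "B * n \<le> B / ln 2 * ln K * n"
    using assms(2,6) by (simp add: field_simps mult_right_mono mult_left_mono)
  moreover have "m * ln K \<le> A * n * ln K"
    using assms(4) \<open>ln K > 0\<close> by (intro mult_right_mono) auto
  ultimately have "m * ln K + B * n \<le> (A + B / ln 2) * ln K * n"
    by (simp add: algebra_simps)
  have "0 \<le> m * ln K" "0 \<le> (A + B / ln 2) * ln K"
    using assms \<open>ln K > 0\<close> by simp_all
  then have "ennreal (m * ln K) + ennreal B * ennreal n = ennreal (m * ln K + B * n)"
    and "ennreal ((A + B / ln 2) * ln K * n) = ennreal ((A + B / ln 2) * ln K) * ennreal n"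
    using assms by (simp_all add: ennreal_mult ennreal_plus)
  with \<open>m * ln K + B * n \<le> (A + B / ln 2) * ln K * n\<close> show ?thesis
    by (metis ennreal_leI)
qed

theorem corollary2p8:
  fixes A :: real
  assumes "A > 0"
  shows "\<exists>C::real. \<forall>(\<phi>::'a::euclidean_space \<Rightarrow> 'a) (\<beta>::real \<times> 'a \<Rightarrow> real).
           bi_lipschitz_homeo \<phi> \<longrightarrow> preserves_lebesgue \<phi> \<longrightarrow>
           \<beta> \<in> borel_measurable halfspace \<longrightarrow> Linf_norm \<beta> < \<infinity> \<longrightarrow>
           carleson_norm (mu_beta \<beta>) < \<infinity> \<longrightarrow>
           (Linf_norm \<beta>)\<^sup>2 \<le> ereal A * enn2ereal (carleson_norm (mu_beta \<beta>)) \<longrightarrow>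
           carleson_norm (mu_beta (\<lambda>(t,x). \<beta> (t, \<phi> x)))
             \<le> ennreal (C * ln (K_const \<phi>)) * carleson_norm (mu_beta \<beta>)"
proof (intro exI[of _ "A + 10 ^ DIM('a) / ln 2"] allI impI)
  fix \<phi> :: "'a \<Rightarrow> 'a" and \<beta> :: "real \<times> 'a \<Rightarrow> real"
  assume bl: "bi_lipschitz_homeo \<phi>" and pl: "preserves_lebesgue \<phi>"
    and \<beta>m: "\<beta> \<in> borel_measurable halfspace" and "Linf_norm \<beta> < \<infinity>"
    and "carleson_norm (mu_beta \<beta>) < \<infinity>"
    and hyp: "(Linf_norm \<beta>)\<^sup>2 \<le> ereal A * enn2ereal (carleson_norm (mu_beta \<beta>))"
  obtain M where bound: "AE p in halfspace. \<bar>\<beta> p\<bar> \<le> M" and M: "ereal (M\<^sup>2) \<le> (Linf_norm \<beta>)\<^sup>2"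
    using Linf_norm_bound[OF \<open>Linf_norm \<beta> < \<infinity>\<close>] .
  obtain n where n: "carleson_norm (mu_beta \<beta>) = ennreal n" "n \<ge> 0"
    using \<open>carleson_norm (mu_beta \<beta>) < \<infinity>\<close> by (cases "carleson_norm (mu_beta \<beta>)") auto
  have "M\<^sup>2 \<le> A * n" using order_trans[OF M hyp] n by simp
  have "carleson_norm (mu_beta (\<lambda>(t,x). \<beta> (t, \<phi> x)))
      \<le> ennreal (M\<^sup>2 * ln (K_const \<phi>)) + ennreal (10 ^ DIM('a)) * ennreal n"
    using emeasure_tent_pullback_le[OF bl pl \<beta>m bound] n(1)
    by (intro carleson_norm_le) (auto simp flip: ennreal_power)
  also have "\<dots> \<le> ennreal ((A + 10 ^ DIM('a) / ln 2) * ln (K_const \<phi>)) * ennreal n"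
    using K_const_ge_2[OF bl] \<open>n \<ge> 0\<close> \<open>M\<^sup>2 \<le> A * n\<close> \<open>A > 0\<close>
    by (intro ennreal_ln_affine_le) auto
  finally show "carleson_norm (mu_beta (\<lambda>(t,x). \<beta> (t, \<phi> x)))
      \<le> ennreal ((A + 10 ^ DIM('a) / ln 2) * ln (K_const \<phi>)) * carleson_norm (mu_beta \<beta>)"
    unfolding n(1) .
qed

end
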